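(* Let $\sigma:\mathbb{R}\to\mathbb{R}$ be $\sigma(x)=\operatorname{sgn}(x)x^2$. Then every nonzero point of $\mathbb{R}^2$ has a dense orbit in $\mathbb{R}^2$ under the action of $\Gamma(\sigma)$. Moreover, the set $\bigcup_{n=0}^{\infty}\bigcup_{k=0}^{\infty}E_\sigma^{-k}\big(\{E_\sigma^n(1,0)\}\big)$ is a discrete subset of $\mathbb{R}_{\geq 0}^2$.
   Context: For an increasing odd homeomorphism $\sigma:\mathbb{R}\to\mathbb{R}$, define $h_\sigma(x,y)=(x+\sigma^{-1}(y),y)$ and $v_\sigma(x,y)=(x,\sigma(x)+y)$ on $\mathbb{R}^2$, and let $\Gamma(\sigma)$ be the group generated by $h_\sigma,v_\sigma$. The generalized Euclidean algorithm is the map $E_\sigma:\mathbb{R}_{\geq0}^2\to\mathbb{R}_{\geq0}^2$ given by $E_\sigma(x,y)=(x-\sigma^{-1}(y),y)$ if $y<\sigma(x)$ and $E_\sigma(x,y)=(x,y-\sigma(x))$ if $y\geq\sigma(x)$; $E_\sigma^{-k}(S)$ denotes the preimage of $S$ under the $k$-th iterate. *)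

theory Defs
  imports "HOL-Analysis.Analysis"
begin

text \<open>The generators of Gamma(sigma), for an increasing odd homeomorphism sigma.
  The inverse of sigma is the library inverse inv sigma.\<close>

definition hmap :: "(real \<Rightarrow> real) \<Rightarrow> real \<times> real \<Rightarrow> real \<times> real" where
  "hmap \<sigma> p = (fst p + inv \<sigma> (snd p), snd p)"

definition vmap :: "(real \<Rightarrow> real) \<Rightarrow> real \<times> real \<Rightarrow> real \<times> real" where
  "vmap \<sigma> p = (fst p, \<sigma> (fst p) + snd p)"

inductive_set Gamma :: "(real \<Rightarrow> real) \<Rightarrow> (real \<times> real \<Rightarrow> real \<times> real) set"
  for \<sigma> :: "real \<Rightarrow> real" where
  Gamma_id: "id \<in> Gamma \<sigma>"
| Gamma_h: "g \<in> Gamma \<sigma> \<Longrightarrow> hmap \<sigma> \<circ> g \<in> Gamma \<sigma>"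
| Gamma_v: "g \<in> Gamma \<sigma> \<Longrightarrow> vmap \<sigma> \<circ> g \<in> Gamma \<sigma>"
| Gamma_hinv: "g \<in> Gamma \<sigma> \<Longrightarrow> inv (hmap \<sigma>) \<circ> g \<in> Gamma \<sigma>"
| Gamma_vinv: "g \<in> Gamma \<sigma> \<Longrightarrow> inv (vmap \<sigma>) \<circ> g \<in> Gamma \<sigma>"

definition orbit :: "(real \<Rightarrow> real) \<Rightarrow> real \<times> real \<Rightarrow> (real \<times> real) set" where
  "orbit \<sigma> p = (\<lambda>g. g p) ` Gamma \<sigma>"

definition quadrant :: "(real \<times> real) set" where
  "quadrant = {p. fst p \<ge> 0 \<and> snd p \<ge> 0}"

text \<open>The generalized Euclidean algorithm (meaningful on the quadrant).\<close>
definition Eucl :: "(real \<Rightarrow> real) \<Rightarrow> real \<times> real \<Rightarrow> real \<times> real" where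
  "Eucl \<sigma> p = (if snd p < \<sigma> (fst p) then (fst p - inv \<sigma> (snd p), snd p)
                 else (fst p, snd p - \<sigma> (fst p)))"

definition Eucl_preimage :: "(real \<Rightarrow> real) \<Rightarrow> nat \<Rightarrow> (real \<times> real) set \<Rightarrow> (real \<times> real) set" where
  "Eucl_preimage \<sigma> k S = {p \<in> quadrant. (Eucl \<sigma> ^^ k) p \<in> S}"

definition sigma_sq :: "real \<Rightarrow> real" where
  "sigma_sq x = sgn x * x\<^sup>2"

end

theory Submission
  imports Defs
begin

text \<open>
  For sigma(x) = x |x| the generators of Gamma(sigma) are the shears (x, y) \<mapsto> (x + sqrt y, y)
  and (x, y) \<mapsto> (x, y + x |x|), so the closure C of an orbit is a closed set invariant under
  integer powers of both. Running the Euclidean algorithm inside an orbit (reduce y modulo x^2,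
  then x modulo sqrt y) produces points of arbitrarily small positive height, and horizontal
  shears of step sqrt y then put the whole x-axis into C. Starting from the axis, the slopes s of
  the parabolas y = x^2 / s^2 contained in C contain 1 and are closed under s \<mapsto> s + 1 and
  1 / s^2 \<mapsto> 1 / s^2 + 1. A gap in such a set can be translated and inverted into a gap at least
  twice as long, while no gap is longer than 1; so the slopes are dense, C contains the open
  quadrant, and then everything.

  For the second part, (1, 0) is fixed by E, and E is at most two-to-one. Every other point
  reaching (1, 0) has both coordinates at least 1, so each step lowers x + y by at least 1: a
  bounded part of the backward orbit is reached in boundedly many steps and hence finite.
\<close>

section \<open>The generators for sigma(x) = x |x|\<close>

lemma sigma_sq_eq: "sigma_sq x = x * \<bar>x\<bar>"
  by (simp add: sigma_sq_def sgn_if power2_eq_square)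

lemma sqrt_sigma_sq: "sqrt (sigma_sq x) = x"
  by (cases "x \<ge> 0") (simp_all add: sigma_sq_eq real_sqrt_minus)

lemma sigma_sq_sqrt: "sigma_sq (sqrt y) = y"
  by (cases "y \<ge> 0") (simp_all add: sigma_sq_eq real_sqrt_minus)

text \<open>The real square root of Isabelle is odd, so it is exactly the inverse of x |x|.\<close>

lemma inv_sigma_sq: "inv sigma_sq = sqrt"
  by (metis inv_equality sigma_sq_sqrt sqrt_sigma_sq)

lemma hmap_sigma_sq: "hmap sigma_sq (x, y) = (x + sqrt y, y)"
  by (simp add: hmap_def inv_sigma_sq)

lemma vmap_sigma_sq: "vmap sigma_sq (x, y) = (x, y + x * \<bar>x\<bar>)"
  by (simp add: vmap_def sigma_sq_eq)

lemma inv_hmap_sigma_sq: "inv (hmap sigma_sq) (x, y) = (x - sqrt y, y)"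
proof -
  have "inv (hmap sigma_sq) = (\<lambda>(x, y). (x - sqrt y, y))"
    by (rule inv_equality) (auto simp: hmap_sigma_sq)
  then show ?thesis by simp
qed

lemma inv_vmap_sigma_sq: "inv (vmap sigma_sq) (x, y) = (x, y - x * \<bar>x\<bar>)"
proof -
  have "inv (vmap sigma_sq) = (\<lambda>(x, y). (x, y - x * \<bar>x\<bar>))"
    by (rule inv_equality) (auto simp: vmap_sigma_sq)
  then show ?thesis by simp
qed

lemma Eucl_sigma_sq:
  "Eucl sigma_sq (x, y) = (if y < x * \<bar>x\<bar> then (x - sqrt y, y) else (x, y - x * \<bar>x\<bar>))"
  by (simp add: Eucl_def sigma_sq_eq inv_sigma_sq)

section \<open>Shear-invariant sets\<close>

definition shear_invariant :: "(real \<times> real) set \<Rightarrow> bool" where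
  "shear_invariant S \<longleftrightarrow> (\<forall>x y. (x, y) \<in> S \<longrightarrow>
     (x + sqrt y, y) \<in> S \<and> (x - sqrt y, y) \<in> S \<and> (x, y + x * \<bar>x\<bar>) \<in> S \<and> (x, y - x * \<bar>x\<bar>) \<in> S)"

lemma mem_orbit_self: "p \<in> orbit \<sigma> p"
  unfolding orbit_def by (rule image_eqI[where x = id]) (simp_all add: Gamma_id)

lemma shear_invariant_orbit: "shear_invariant (orbit sigma_sq p)"
  unfolding shear_invariant_def
proof (intro allI impI)
  fix x y assume "(x, y) \<in> orbit sigma_sq p"
  then obtain g where g: "g \<in> Gamma sigma_sq" and xy: "(x, y) = g p" by (auto simp: orbit_def)
  have "f (x, y) \<in> orbit sigma_sq p" if "f \<circ> g \<in> Gamma sigma_sq" for f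
    using that unfolding orbit_def xy by (metis comp_apply image_eqI)
  from this[OF Gamma_h[OF g]] this[OF Gamma_hinv[OF g]] this[OF Gamma_v[OF g]] this[OF Gamma_vinv[OF g]]
  show "(x + sqrt y, y) \<in> orbit sigma_sq p \<and> (x - sqrt y, y) \<in> orbit sigma_sq p \<and>
    (x, y + x * \<bar>x\<bar>) \<in> orbit sigma_sq p \<and> (x, y - x * \<bar>x\<bar>) \<in> orbit sigma_sq p"
    by (simp add: hmap_sigma_sq inv_hmap_sigma_sq vmap_sigma_sq inv_vmap_sigma_sq)
qed

lemma shear_invariant_closure:
  assumes "shear_invariant S"
  shows "shear_invariant (closure S)"
proof -
  have "\<forall>p\<in>closure S. f p \<in> closure S" if "continuous_on UNIV f" "\<forall>p\<in>S. f p \<in> S"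
    for f :: "real \<times> real \<Rightarrow> real \<times> real"
  proof -
    have "f ` closure S \<subseteq> closure S"
      using that by (intro image_closure_subset) (auto intro: continuous_on_subset closure_subset[THEN subsetD])
    then show ?thesis by blast
  qed
  from this[of "\<lambda>(x, y). (x + sqrt y, y)"] this[of "\<lambda>(x, y). (x - sqrt y, y)"]
    this[of "\<lambda>(x, y). (x, y + x * \<bar>x\<bar>)"] this[of "\<lambda>(x, y). (x, y - x * \<bar>x\<bar>)"]
  show ?thesis
    using assms unfolding shear_invariant_def by (simp add: case_prod_unfold continuous_intros) force
qed

lemma shear_invariant_hshift:
  assumes "shear_invariant S" and "(x, y) \<in> S"
  shows "(x + of_int k * sqrt y, y) \<in> S"
proof (induction k rule: int_induct[where k = 0])
  case base
  then show ?case using assms(2) by simp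
next
  case (step1 i)
  then show ?case using assms(1) unfolding shear_invariant_def by (force simp: algebra_simps)
next
  case (step2 i)
  then show ?case using assms(1) unfolding shear_invariant_def by (force simp: algebra_simps)
qed

lemma shear_invariant_vshift:
  assumes "shear_invariant S" and "(x, y) \<in> S"
  shows "(x, y + of_int k * (x * \<bar>x\<bar>)) \<in> S"
proof (induction k rule: int_induct[where k = 0])
  case base
  then show ?case using assms(2) by simp
next
  case (step1 i)
  then show ?case using assms(1) unfolding shear_invariant_def by (force simp: algebra_simps)
next
  case (step2 i)
  then show ?case using assms(1) unfolding shear_invariant_def by (force simp: algebra_simps)
qed

lemma shear_invariant_vshift_sq:
  assumes "shear_invariant S" and "(x, y) \<in> S"
  shows "(x, y + of_int k * (x * x)) \<in> S"
proof (cases "x \<ge> 0")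
  case True
  then show ?thesis using shear_invariant_vshift[OF assms, of k] by simp
next
  case False
  then show ?thesis using shear_invariant_vshift[OF assms, of "- k"] by simp
qed

section \<open>Reaching the horizontal axis\<close>

lemma shear_invariant_small_abscissa:
  assumes S: "shear_invariant S" and a: "0 < a" "(a, 0) \<in> S" and "0 < d"
  obtains \<delta> Y where "(\<delta>, Y) \<in> S" "\<delta> \<noteq> 0" "\<bar>\<delta>\<bar> < d"
proof -
  obtain n :: nat where n: "a / d < real n" using reals_Archimedean2 by blast
  define c where "c = (real n + 1) * a"
  define Y where "Y = a * a + c * c"
  define \<delta> where "\<delta> = c - sqrt Y"
  have c: "0 < c" using a by (simp add: c_def)
  have "(a, a * a) \<in> S" using shear_invariant_vshift_sq[OF S a(2), of 1] by simp
  then have "(c, a * a) \<in> S"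
    using shear_invariant_hshift[OF S, of a "a * a" "int n"] a by (simp add: c_def algebra_simps)
  then have "(c, Y) \<in> S" using shear_invariant_vshift_sq[OF S, of c "a * a" 1] by (simp add: Y_def)
  then have "(\<delta>, Y) \<in> S"
    using shear_invariant_hshift[OF S, of c Y "-1"] by (simp add: \<delta>_def)
  have "c < sqrt Y" using a by (intro real_less_rsqrt) (simp add: Y_def power2_eq_square)
  then have "\<delta> < 0" by (simp add: \<delta>_def)
  have "(c + a * a / c)\<^sup>2 = Y + (a * a + (a * a / c)\<^sup>2)"
    using c by (simp add: Y_def power2_eq_square field_simps)
  then have "sqrt Y \<le> c + a * a / c"
    using a c by (intro real_le_lsqrt) simp_all
  then have "\<bar>\<delta>\<bar> \<le> a * a / c"
    using \<open>\<delta> < 0\<close> by (simp add: \<delta>_def)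
  also have "\<dots> = a / (real n + 1)"
    using a by (simp add: c_def)
  also have "\<dots> < d"
  proof -
    have "a < d * (real n + 1)" using n \<open>0 < d\<close> by (simp add: field_simps)
    then show ?thesis by (simp add: pos_divide_less_eq mult.commute)
  qed
  finally show ?thesis using that \<open>(\<delta>, Y) \<in> S\<close> \<open>\<delta> < 0\<close> by simp
qed

lemma shear_invariant_small_height_from_axis:
  assumes S: "shear_invariant S" and a: "0 < a" "(a, 0) \<in> S" and "0 < \<epsilon>"
  shows "\<exists>x y. (x, y) \<in> S \<and> 0 < y \<and> y < \<epsilon>"
proof -
  define d where "d = min 1 \<epsilon>"
  have d: "0 < d" "d \<le> 1" "d \<le> \<epsilon>" using \<open>0 < \<epsilon>\<close> by (auto simp: d_def)
  obtain \<delta> Y where "(\<delta>, Y) \<in> S" "\<delta> \<noteq> 0" "\<bar>\<delta>\<bar> < d"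
    using shear_invariant_small_abscissa[OF S a \<open>0 < d\<close>] by blast
  have "0 < \<delta> * \<delta>" using \<open>\<delta> \<noteq> 0\<close> not_real_square_gt_zero by blast
  have "\<delta> * \<delta> = \<bar>\<delta>\<bar> * \<bar>\<delta>\<bar>" by simp
  also have "\<dots> < d * d" using \<open>\<bar>\<delta>\<bar> < d\<close> by (intro mult_strict_mono) auto
  also have "\<dots> \<le> \<epsilon>" using d mult_right_le_one_le[of d d] by linarith
  finally have "\<delta> * \<delta> < \<epsilon>" .
  \<comment> \<open>Vertical shears move the height by multiples of \<delta>^2; land it in (0, \<delta>^2].\<close>
  define k where "k = 1 - \<lceil>Y / (\<delta> * \<delta>)\<rceil>"
  have "(\<delta>, Y + of_int k * (\<delta> * \<delta>)) \<in> S" by (rule shear_invariant_vshift_sq[OF S \<open>(\<delta>, Y) \<in> S\<close>])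
  moreover have "0 < Y + of_int k * (\<delta> * \<delta>)" "Y + of_int k * (\<delta> * \<delta>) \<le> \<delta> * \<delta>"
    using ceiling_divide_lower[of "\<delta> * \<delta>" Y] ceiling_divide_upper[of "\<delta> * \<delta>" Y] \<open>0 < \<delta> * \<delta>\<close>
    by (simp_all add: k_def algebra_simps)
  ultimately show ?thesis using \<open>\<delta> * \<delta> < \<epsilon>\<close> by force
qed

lemma shear_invariant_descent:
  assumes S: "shear_invariant S" and "0 < \<epsilon>"
    and "(x, y) \<in> S" "0 < x" "0 \<le> y" "x < real n * sqrt \<epsilon>"
  shows "\<exists>x' y'. (x', y') \<in> S \<and> 0 < x' \<and> 0 \<le> y' \<and> y' < \<epsilon>"
  using assms(3-)
proof (induction n arbitrary: x y)
  case 0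
  then show ?case by simp
next
  case (Suc n)
  define y' where "y' = y - of_int \<lfloor>y / (x * x)\<rfloor> * (x * x)"
  have y'S: "(x, y') \<in> S"
    using shear_invariant_vshift_sq[OF S Suc.prems(1), of "- \<lfloor>y / (x * x)\<rfloor>"] by (simp add: y'_def)
  have y': "0 \<le> y'" "y' < x * x"
    using floor_divide_lower[of "x * x" y] floor_divide_upper[of "x * x" y] Suc.prems(2)
    by (simp_all add: y'_def algebra_simps)
  show ?case
  proof (cases "y' < \<epsilon>")
    case True
    then show ?thesis using y'S y' Suc.prems(2) by blast
  next
    case False
    then have "sqrt \<epsilon> \<le> sqrt y'" by simp
    moreover have "sqrt y' < x"
      using real_sqrt_less_mono[OF y'(2)] Suc.prems(2) by simp
    moreover have "x < sqrt \<epsilon> + real n * sqrt \<epsilon>"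
      using Suc.prems(4) by (simp add: algebra_simps)
    ultimately have "0 < x - sqrt y'" "x - sqrt y' < real n * sqrt \<epsilon>" by linarith+
    moreover have "(x - sqrt y', y') \<in> S"
      using shear_invariant_hshift[OF S y'S, of "-1"] by simp
    ultimately show ?thesis using Suc.IH y'(1) by blast
  qed
qed

lemma shear_invariant_small_height:
  assumes S: "shear_invariant S" and "(x, y) \<in> S" "0 < x" "0 \<le> y" and "0 < \<epsilon>"
  shows "\<exists>x' y'. (x', y') \<in> S \<and> 0 < y' \<and> y' < \<epsilon>"
proof -
  obtain n where "x < real n * sqrt \<epsilon>" using ex_less_of_nat_mult[of "sqrt \<epsilon>" x] \<open>0 < \<epsilon>\<close> by auto
  then obtain x' y' where "(x', y') \<in> S" "0 < x'" "0 \<le> y'" "y' < \<epsilon>"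
    using shear_invariant_descent[OF S \<open>0 < \<epsilon>\<close> assms(2-4)] by blast
  then show ?thesis
  proof (cases "y' = 0")
    case True
    then show ?thesis
      using shear_invariant_small_height_from_axis[OF S \<open>0 < x'\<close> _ \<open>0 < \<epsilon>\<close>] \<open>(x', y') \<in> S\<close> by simp
  next
    case False
    then show ?thesis using \<open>(x', y') \<in> S\<close> \<open>0 \<le> y'\<close> \<open>y' < \<epsilon>\<close> by force
  qed
qed

lemma shear_invariant_shift_right:
  assumes S: "shear_invariant S" and "(x, y) \<in> S" "y \<noteq> 0"
  obtains x' where "0 < x'" "(x', y) \<in> S"
proof -
  have "0 < \<bar>sqrt y\<bar>" using \<open>y \<noteq> 0\<close> by simp
  then obtain m :: nat where m: "\<bar>x\<bar> < real m * \<bar>sqrt y\<bar>" using ex_less_of_nat_mult by blast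
  define k where "k = (if y > 0 then int m else - int m)"
  have "of_int k * sqrt y = real m * \<bar>sqrt y\<bar>"
    using \<open>y \<noteq> 0\<close> by (simp add: k_def real_sqrt_minus abs_if)
  then show ?thesis
    using that[of "x + of_int k * sqrt y"] shear_invariant_hshift[OF S assms(2), of k] m by simp
qed

lemma shear_invariant_right_half_plane:
  assumes S: "shear_invariant S" and "(x, y) \<in> S" "(x, y) \<noteq> (0, 0)"
  obtains x' y' where "(x', y') \<in> S" "0 < x'" "0 \<le> y'"
proof -
  obtain y0 where y0: "(x, y0) \<in> S" "y0 \<noteq> 0"
  proof (cases "y = 0")
    case True
    then show ?thesis
      using that[of "x * x"] shear_invariant_vshift_sq[OF S assms(2), of 1] assms(3) by simp
  next
    case False
    then show ?thesis using that assms(2) by blast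
  qed
  then obtain x' where x': "0 < x'" "(x', y0) \<in> S" using shear_invariant_shift_right[OF S] by blast
  define k where "k = \<lceil>\<bar>y0\<bar> / (x' * x')\<rceil>"
  have "\<bar>y0\<bar> \<le> of_int k * (x' * x')"
    using ceiling_divide_upper[of "x' * x'" "\<bar>y0\<bar>"] x'(1) by (simp add: k_def)
  then show ?thesis
    using that[OF shear_invariant_vshift_sq[OF S x'(2), of k] x'(1)] by linarith
qed

lemma dist_Pair_le_sum_abs: "dist (a, b) (c, d) \<le> \<bar>a - c\<bar> + \<bar>b - d :: real\<bar>"
  using sqrt_sum_squares_le_sum_abs[of "a - c" "b - d"] by (simp add: dist_Pair_Pair dist_real_def)

lemma shear_invariant_axis_in_closure:
  assumes S: "shear_invariant S" and small: "\<And>\<epsilon>. 0 < \<epsilon> \<Longrightarrow> \<exists>x y. (x, y) \<in> S \<and> 0 < y \<and> y < \<epsilon>"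
  shows "(t, 0) \<in> closure S"
  unfolding closure_approachable
proof (intro allI impI)
  fix e :: real assume "0 < e"
  then obtain x y where xy: "(x, y) \<in> S" "0 < y" "y < min (e / 2) ((e / 2)\<^sup>2)"
    using small[of "min (e / 2) ((e / 2)\<^sup>2)"] by auto
  then have "sqrt y < e / 2"
    using real_sqrt_less_mono[of y "(e / 2)\<^sup>2"] \<open>0 < e\<close> by simp
  define k where "k = \<lceil>(t - x) / sqrt y\<rceil>"
  have "\<bar>x + of_int k * sqrt y - t\<bar> < sqrt y"
    using ceiling_divide_upper[of "sqrt y" "t - x"] ceiling_divide_lower[of "sqrt y" "t - x"] xy(2)
    by (simp add: k_def algebra_simps abs_if)
  then have "dist (x + of_int k * sqrt y, y) (t, 0) < e"
    using dist_Pair_le_sum_abs[of "x + of_int k * sqrt y" y t 0] \<open>sqrt y < e / 2\<close> xy(2,3)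
    by simp
  then show "\<exists>q\<in>S. dist q (t, 0) < e"
    using shear_invariant_hshift[OF S xy(1), of k] by blast
qed

section \<open>Sets of slopes closed under two translations\<close>

lemma inverse_power2_less_iff:
  fixes s t :: real
  assumes "0 < s" "0 < t"
  shows "1 / t\<^sup>2 < 1 / s\<^sup>2 \<longleftrightarrow> s < t"
proof -
  have "1 / t\<^sup>2 < 1 / s\<^sup>2 \<longleftrightarrow> s\<^sup>2 < t\<^sup>2" using assms by (simp add: frac_less2 field_simps)
  also have "\<dots> \<longleftrightarrow> s < t" using assms by (simp add: linorder_not_le[symmetric])
  finally show ?thesis .
qed

lemma inverse_power2_inverse_sqrt: "0 < u \<Longrightarrow> 1 / (1 / sqrt u)\<^sup>2 = u"
  by (simp add: power_divide)

lemma inverse_sqrt_diff: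
  fixes u v :: real
  assumes "0 < u" "0 < v"
  shows "1 / sqrt v - 1 / sqrt u = (u - v) / (sqrt u * sqrt v * (sqrt u + sqrt v))"
proof -
  have "u - v = (sqrt u - sqrt v) * (sqrt u + sqrt v)"
    using assms by (simp add: algebra_simps)
  moreover have "0 < sqrt u + sqrt v" using assms by (intro add_pos_pos) simp_all
  ultimately have "(u - v) / (sqrt u * sqrt v * (sqrt u + sqrt v)) = (sqrt u - sqrt v) / (sqrt u * sqrt v)"
    by simp
  also have "\<dots> = 1 / sqrt v - 1 / sqrt u" using assms by (simp add: diff_divide_distrib)
  finally show ?thesis by simp
qed

lemma inverse_sqrt_diff_shift_le:
  fixes p q m :: real
  assumes "0 < q" "q < p" "p \<le> 1" "1 \<le> m"
  shows "2 * (1 / sqrt (q + m) - 1 / sqrt (p + m)) \<le> 1 / sqrt q - 1 / sqrt p"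
proof -
  define den where "den = sqrt p * sqrt q * (sqrt p + sqrt q)"
  define den' where "den' = sqrt (p + m) * sqrt (q + m) * (sqrt (p + m) + sqrt (q + m))"
  have "p * q \<le> m * p" "p * q \<le> m * q" "p * q \<le> m * m"
    using assms mult_mono[of p m q 1] mult_mono[of q m p 1] mult_mono[of p m q m] mult_mono[of 1 m 1 m]
    by (simp_all add: mult.commute)
  moreover have "(p + m) * (q + m) = p * q + m * p + m * q + m * m" by (simp add: algebra_simps)
  ultimately have "4 * (p * q) \<le> (p + m) * (q + m)" by linarith
  then have "sqrt (4 * (p * q)) \<le> sqrt ((p + m) * (q + m))" by (rule real_sqrt_le_mono)
  then have "2 * (sqrt p * sqrt q) \<le> sqrt (p + m) * sqrt (q + m)"
    by (simp add: real_sqrt_mult)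
  moreover have "sqrt p + sqrt q \<le> sqrt (p + m) + sqrt (q + m)"
    using assms by (intro add_mono) simp_all
  ultimately have "2 * den \<le> den'"
    using assms by (simp add: den_def den'_def mult.assoc[symmetric] mult_mono)
  then have "2 * (p - q) / den' \<le> 2 * (p - q) / (2 * den)"
    using assms by (intro frac_le) (simp_all add: den_def add_pos_pos)
  also have "\<dots> = (p - q) / den" by (rule mult_divide_mult_cancel_left) simp
  finally have "2 * ((p - q) / den') \<le> (p - q) / den" by simp
  moreover have "1 / sqrt q - 1 / sqrt p = (p - q) / den"
    using assms inverse_sqrt_diff[of p q] by (simp add: den_def)
  moreover have "1 / sqrt (q + m) - 1 / sqrt (p + m) = (p - q) / den'"
    using assms inverse_sqrt_diff[of "p + m" "q + m"] by (simp add: den'_def)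
  ultimately show ?thesis by simp
qed

definition gap :: "real set \<Rightarrow> real \<Rightarrow> real \<Rightarrow> bool" where
  "gap A a b \<longleftrightarrow> 0 < a \<and> a < b \<and> (\<forall>r\<in>A. r \<le> a \<or> b \<le> r)"

text \<open>In the coordinate u = 1 / r^2 the last closure property is again a translation by 1.\<close>

locale bi_translation_closed =
  fixes A :: "real set"
  assumes pos: "r \<in> A \<Longrightarrow> 0 < r"
    and one_mem: "1 \<in> A"
    and add_one_mem: "r \<in> A \<Longrightarrow> r + 1 \<in> A"
    and inverse_sqrt_mem: "r \<in> A \<Longrightarrow> 1 / sqrt (1 / r\<^sup>2 + 1) \<in> A"
begin

lemma add_nat_mem: "r \<in> A \<Longrightarrow> r + real n \<in> A"
proof (induction n)
  case (Suc n)
  then show ?case using add_one_mem[OF Suc.IH[OF Suc.prems]] by (simp add: ac_simps)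
qed simp

lemma inverse_sqrt_add_nat_mem: "r \<in> A \<Longrightarrow> 1 / sqrt (1 / r\<^sup>2 + real n) \<in> A"
proof (induction n)
  case 0
  then show ?case using pos[of r] by (simp add: real_sqrt_divide)
next
  case (Suc n)
  have "0 < 1 / r\<^sup>2 + real n" using pos[OF Suc.prems] by (simp add: add_pos_nonneg)
  then show ?case
    using inverse_sqrt_mem[OF Suc.IH[OF Suc.prems]] by (simp add: inverse_power2_inverse_sqrt ac_simps)
qed

lemma nat_mem: "real n + 1 \<in> A"
  using add_nat_mem[OF one_mem, of n] by (simp add: add.commute)

lemma inverse_sqrt_nat_mem: "1 / sqrt (real n + 1) \<in> A"
  using inverse_sqrt_add_nat_mem[OF one_mem, of n] by (simp add: add.commute)

lemma gap_le_one:
  assumes "gap A a b"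
  shows "b - a \<le> 1"
proof -
  have "0 < a" and not_between: "\<And>r. r \<in> A \<Longrightarrow> r \<le> a \<or> b \<le> r" using assms by (auto simp: gap_def)
  then have "real (nat \<lfloor>a\<rfloor>) + 1 = of_int \<lfloor>a\<rfloor> + 1" by simp
  then show ?thesis using not_between[OF nat_mem[of "nat \<lfloor>a\<rfloor>"]] by linarith
qed

lemma gap_translate_unit:
  assumes "gap A a b"
  obtains a' b' where "gap A a' b'" "b' \<le> 1" "b' - a' = b - a"
proof -
  have "0 < a" "a < b" and not_between: "\<And>r. r \<in> A \<Longrightarrow> r \<le> a \<or> b \<le> r"
    using assms by (auto simp: gap_def)
  define n where "n = nat \<lfloor>a\<rfloor>"
  have n: "real n \<le> a" "a < real n + 1" using \<open>0 < a\<close> by (simp_all add: n_def)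
  define a' b' where "a' = a - real n" and "b' = b - real n"
  have not_between': "r \<le> a' \<or> b' \<le> r" if "r \<in> A" for r
    using not_between[OF add_nat_mem[OF that, of n]] by (auto simp: a'_def b'_def)
  have "b' \<le> 1" using not_between[OF nat_mem[of n]] n by (simp add: b'_def)
  have "0 \<le> a'" "a' < b'" using n \<open>a < b\<close> by (simp_all add: a'_def b'_def)
  have "0 < a'"
  proof (rule ccontr)
    assume "\<not> 0 < a'"
    obtain N :: nat where "1 / b'\<^sup>2 < real N" using reals_Archimedean2 by blast
    then have "1 / b'\<^sup>2 < real N + 1" by linarith
    moreover have "0 < 1 / sqrt (real N + 1)" "1 / (1 / sqrt (real N + 1))\<^sup>2 = real N + 1"
      by (simp_all add: inverse_power2_inverse_sqrt add_pos_nonneg)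
    ultimately have "1 / sqrt (real N + 1) < b'"
      using inverse_power2_less_iff[of "1 / sqrt (real N + 1)" b'] \<open>0 \<le> a'\<close> \<open>a' < b'\<close> by simp
    then show False
      using not_between'[OF inverse_sqrt_nat_mem[of N]] \<open>\<not> 0 < a'\<close>
        \<open>0 < 1 / sqrt (real N + 1)\<close> by linarith
  qed
  then have "gap A a' b'" using not_between' \<open>a' < b'\<close> by (simp add: gap_def)
  with that show ?thesis using \<open>b' \<le> 1\<close> by (simp add: a'_def b'_def)
qed

lemma gap_inverse_square_translate:
  assumes "gap A a b" "b \<le> 1"
  obtains m :: nat where "1 \<le> real m" "real m \<le> 1 / b\<^sup>2" "1 / a\<^sup>2 \<le> real m + 1"
    "\<And>t. t \<in> A \<Longrightarrow> 1 / t\<^sup>2 + real m \<le> 1 / b\<^sup>2 \<or> 1 / a\<^sup>2 \<le> 1 / t\<^sup>2 + real m"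
proof -
  have "0 < a" "a < b" and not_between: "\<And>r. r \<in> A \<Longrightarrow> r \<le> a \<or> b \<le> r"
    using assms(1) by (auto simp: gap_def)
  define m where "m = nat \<lfloor>1 / b\<^sup>2\<rfloor>"
  have "1 \<le> 1 / b\<^sup>2" using \<open>0 < a\<close> \<open>a < b\<close> \<open>b \<le> 1\<close> by (simp add: power_le_one)
  then have m: "1 \<le> real m" "real m \<le> 1 / b\<^sup>2" "1 / b\<^sup>2 < real m + 1"
    by (simp_all add: m_def)
  define s where "s = 1 / sqrt (real m + 1)"
  have "0 < s" "1 / s\<^sup>2 = real m + 1"
    by (simp_all add: s_def inverse_power2_inverse_sqrt add_pos_nonneg)
  then have "s < b" using m(3) inverse_power2_less_iff[of s b] \<open>0 < a\<close> \<open>a < b\<close> by simp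
  then have "s \<le> a" using not_between[OF inverse_sqrt_nat_mem[of m]] by (simp add: s_def)
  then have "1 / a\<^sup>2 \<le> real m + 1"
    using \<open>0 < s\<close> frac_le[of 1 1 "s\<^sup>2" "a\<^sup>2"] power_mono[of s a 2]
    by (simp add: \<open>1 / s\<^sup>2 = real m + 1\<close>[symmetric])
  moreover have "1 / t\<^sup>2 + real m \<le> 1 / b\<^sup>2 \<or> 1 / a\<^sup>2 \<le> 1 / t\<^sup>2 + real m" if "t \<in> A" for t
  proof (rule ccontr)
    assume between: "\<not> ?thesis"
    define s where "s = 1 / sqrt (1 / t\<^sup>2 + real m)"
    have "0 < 1 / t\<^sup>2 + real m" using pos[OF that] by (simp add: add_pos_nonneg)
    then have "0 < s" "1 / s\<^sup>2 = 1 / t\<^sup>2 + real m"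
      by (simp_all add: s_def inverse_power2_inverse_sqrt)
    then have "s < b" "a < s"
      using between inverse_power2_less_iff[of s b] inverse_power2_less_iff[of a s] \<open>0 < a\<close> \<open>a < b\<close>
      by auto
    then show False using not_between[OF inverse_sqrt_add_nat_mem[OF that, of m]] by (simp add: s_def)
  qed
  ultimately show ?thesis using that m(1,2) by blast
qed

lemma gap_of_inverse_square_gap:
  assumes "0 \<le> q" "q < p" and not_between: "\<And>t. t \<in> A \<Longrightarrow> 1 / t\<^sup>2 \<le> q \<or> p \<le> 1 / t\<^sup>2"
  shows "0 < q" "gap A (1 / sqrt p) (1 / sqrt q)"
proof -
  show "0 < q"
  proof (rule ccontr)
    assume "\<not> 0 < q"
    obtain N :: nat where N: "1 / p < real N" using reals_Archimedean2 by blast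
    have "0 < p" using assms by linarith
    have "real N + 1 \<le> (real N + 1)\<^sup>2" by (simp add: power2_eq_square)
    then have "1 / p < (real N + 1)\<^sup>2" using N by linarith
    then have "1 / (real N + 1)\<^sup>2 < p" using \<open>0 < p\<close> by (simp add: field_simps)
    moreover have "0 < 1 / (real N + 1)\<^sup>2" by simp
    ultimately show False
      using not_between[OF nat_mem[of N]] \<open>\<not> 0 < q\<close> by linarith
  qed
  show "gap A (1 / sqrt p) (1 / sqrt q)"
    unfolding gap_def
  proof (intro conjI ballI)
    show "0 < 1 / sqrt p" "1 / sqrt p < 1 / sqrt q"
      using \<open>0 < q\<close> assms divide_strict_left_mono[of "sqrt q" "sqrt p" 1] by simp_all
  next
    fix t assume "t \<in> A"
    show "t \<le> 1 / sqrt p \<or> 1 / sqrt q \<le> t"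
    proof (rule ccontr)
      assume "\<not> ?thesis"
      then have "1 / (1 / sqrt p)\<^sup>2 > 1 / t\<^sup>2" "1 / t\<^sup>2 > 1 / (1 / sqrt q)\<^sup>2"
        using pos[OF \<open>t \<in> A\<close>] \<open>0 < q\<close> assms inverse_power2_less_iff by auto
      then show False
        using not_between[OF \<open>t \<in> A\<close>] \<open>0 < q\<close> assms by (simp add: inverse_power2_inverse_sqrt)
    qed
  qed
qed

lemma gap_doubling:
  assumes "gap A a b"
  obtains a' b' where "gap A a' b'" "2 * (b - a) \<le> b' - a'"
proof -
  obtain a1 b1 where gap1: "gap A a1 b1" "b1 \<le> 1" "b1 - a1 = b - a"
    using gap_translate_unit[OF assms] by blast
  then have "0 < a1" "a1 < b1" "0 < b1" by (simp_all add: gap_def)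
  obtain m :: nat where m: "1 \<le> real m" "real m \<le> 1 / b1\<^sup>2" "1 / a1\<^sup>2 \<le> real m + 1"
    and not_between: "\<And>t. t \<in> A \<Longrightarrow> 1 / t\<^sup>2 + real m \<le> 1 / b1\<^sup>2 \<or> 1 / a1\<^sup>2 \<le> 1 / t\<^sup>2 + real m"
    using gap_inverse_square_translate[OF gap1(1,2)] by blast
  define p q where "p = 1 / a1\<^sup>2 - real m" and "q = 1 / b1\<^sup>2 - real m"
  have pq: "0 \<le> q" "q < p" "p \<le> 1"
    using m inverse_power2_less_iff[OF \<open>0 < a1\<close> \<open>0 < b1\<close>] \<open>a1 < b1\<close> by (simp_all add: p_def q_def)
  then have "0 < q" and gap: "gap A (1 / sqrt p) (1 / sqrt q)"
    using gap_of_inverse_square_gap[of q p] not_between by (force simp: p_def q_def)+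
  have "b1 = 1 / sqrt (q + real m)" "a1 = 1 / sqrt (p + real m)"
    using \<open>0 < a1\<close> \<open>a1 < b1\<close> by (simp_all add: p_def q_def real_sqrt_divide)
  then have "2 * (b - a) \<le> 1 / sqrt q - 1 / sqrt p"
    using inverse_sqrt_diff_shift_le[of q p "real m"] \<open>0 < q\<close> pq m(1) gap1(3) by simp
  with gap that show ?thesis by blast
qed

lemma no_gap: "\<not> gap A a b"
proof
  assume "gap A a b"
  have "\<exists>a' b'. gap A a' b' \<and> 2 ^ k * (b - a) \<le> b' - a'" for k
  proof (induction k)
    case 0
    then show ?case using \<open>gap A a b\<close> by auto
  next
    case (Suc k)
    then obtain a' b' where "gap A a' b'" "2 ^ k * (b - a) \<le> b' - a'" by blast
    moreover obtain a'' b'' where "gap A a'' b''" "2 * (b' - a') \<le> b'' - a''"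
      using gap_doubling[OF \<open>gap A a' b'\<close>] by blast
    ultimately show ?case by force
  qed
  moreover obtain k where "1 / (b - a) < 2 ^ k" using real_arch_pow[of 2] by auto
  then have "1 < 2 ^ k * (b - a)" using \<open>gap A a b\<close> by (simp add: gap_def field_simps)
  ultimately obtain a' b' where "gap A a' b'" "1 < b' - a'" by (meson less_le_trans)
  then show False using gap_le_one by fastforce
qed

lemma dense:
  assumes "0 < a" "a < b"
  shows "\<exists>r\<in>A. a < r \<and> r < b"
  using no_gap[of a b] assms by (auto simp: gap_def not_le)

end

section \<open>Density of the orbits\<close>

lemma bi_translation_closed_parabola_slopes:
  assumes C: "shear_invariant C" and axis: "\<And>t. 0 < t \<Longrightarrow> (t, 0) \<in> C"
  shows "bi_translation_closed {s. 0 < s \<and> (\<forall>x>0. (x, x\<^sup>2 / s\<^sup>2) \<in> C)}"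
    (is "bi_translation_closed ?A")
proof
  show "0 < r" if "r \<in> ?A" for r using that by simp
  show "1 \<in> ?A"
    using shear_invariant_vshift_sq[OF C axis, of _ 1] by (simp add: power2_eq_square)
next
  fix r assume "r \<in> ?A"
  then have "0 < r" and r: "\<And>x. 0 < x \<Longrightarrow> (x, x\<^sup>2 / r\<^sup>2) \<in> C" by simp_all
  have "(x, x\<^sup>2 / (r + 1)\<^sup>2) \<in> C" if "0 < x" for x
  proof -
    define y where "y = x * r / (r + 1)"
    have "0 < y" using \<open>0 < r\<close> \<open>0 < x\<close> by (simp add: y_def)
    have "y / r = x / (r + 1)" using \<open>0 < r\<close> by (simp add: y_def)
    have "y + x / (r + 1) = x * (r + 1) / (r + 1)"
      by (simp only: y_def add_divide_distrib[symmetric] distrib_left mult_1_right)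
    then have "y + x / (r + 1) = x" using \<open>0 < r\<close> by simp
    have "sqrt (y\<^sup>2 / r\<^sup>2) = x / (r + 1)"
      using \<open>0 < y\<close> \<open>0 < r\<close> \<open>y / r = x / (r + 1)\<close> by (simp add: real_sqrt_divide)
    moreover have "y\<^sup>2 / r\<^sup>2 = x\<^sup>2 / (r + 1)\<^sup>2"
      using \<open>y / r = x / (r + 1)\<close> by (simp add: power_divide[symmetric])
    ultimately show ?thesis
      using shear_invariant_hshift[OF C r[OF \<open>0 < y\<close>], of 1] \<open>y + x / (r + 1) = x\<close> by simp
  qed
  then show "r + 1 \<in> ?A" using \<open>0 < r\<close> by simp
  have "0 < 1 / r\<^sup>2 + 1" by (intro add_nonneg_pos) simp_all
  have "(x, x\<^sup>2 / (1 / sqrt (1 / r\<^sup>2 + 1))\<^sup>2) \<in> C" if "0 < x" for x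
    using shear_invariant_vshift_sq[OF C r[OF that], of 1] \<open>0 < 1 / r\<^sup>2 + 1\<close>
    by (simp add: inverse_power2_inverse_sqrt field_simps power2_eq_square)
  then show "1 / sqrt (1 / r\<^sup>2 + 1) \<in> ?A"
    using \<open>0 < 1 / r\<^sup>2 + 1\<close> by simp
qed

lemma shear_invariant_open_quadrant_subset:
  assumes C: "closed C" "shear_invariant C" and axis: "\<And>t. 0 < t \<Longrightarrow> (t, 0) \<in> C"
    and "0 < x" "0 < y"
  shows "(x, y) \<in> C"
proof -
  define A where "A = {s. 0 < s \<and> (\<forall>x>0. (x, x\<^sup>2 / s\<^sup>2) \<in> C)}"
  interpret bi_translation_closed A
    unfolding A_def using C(2) axis by (rule bi_translation_closed_parabola_slopes)
  have "s \<in> A" if "0 < s" for s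
  proof -
    have "\<exists>r. r \<in> A \<and> s < r \<and> r < s + inverse (real (Suc n))" for n
      using dense[OF \<open>0 < s\<close>, of "s + inverse (real (Suc n))"] by auto
    then obtain r where r: "\<forall>n. r n \<in> A \<and> s < r n \<and> r n < s + inverse (real (Suc n))"
      using choice[of "\<lambda>n r. r \<in> A \<and> s < r \<and> r < s + inverse (real (Suc n))"] by blast
    have "r \<longlonglongrightarrow> s"
    proof (rule tendsto_sandwich[of "\<lambda>_. s" _ _ "\<lambda>n. s + inverse (real (Suc n))"])
      show "\<forall>\<^sub>F n in sequentially. s \<le> r n" "\<forall>\<^sub>F n in sequentially. r n \<le> s + inverse (real (Suc n))"
        using r by (simp_all add: less_imp_le)
    qed (use LIMSEQ_inverse_real_of_nat_add[of s] in simp_all)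
    have "(x, x\<^sup>2 / s\<^sup>2) \<in> C" if "0 < x" for x
    proof (rule closed_sequentially[OF C(1)])
      show "(x, x\<^sup>2 / (r n)\<^sup>2) \<in> C" for n using r \<open>0 < x\<close> by (simp add: A_def)
      show "(\<lambda>n. (x, x\<^sup>2 / (r n)\<^sup>2)) \<longlonglongrightarrow> (x, x\<^sup>2 / s\<^sup>2)"
        using \<open>r \<longlonglongrightarrow> s\<close> \<open>0 < s\<close> by (intro tendsto_intros) auto
    qed
    then show ?thesis using \<open>0 < s\<close> by (simp add: A_def)
  qed
  then have "(x, x\<^sup>2 / (x / sqrt y)\<^sup>2) \<in> C"
    using \<open>0 < x\<close> \<open>0 < y\<close> by (simp add: A_def)
  then show ?thesis
    using \<open>0 < x\<close> \<open>0 < y\<close> by (simp add: power_divide)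
qed

lemma shear_invariant_eq_UNIV:
  assumes C: "closed C" "shear_invariant C" and axis: "\<And>t. (t, 0) \<in> C"
  shows "C = UNIV"
proof -
  have upper: "(x, y) \<in> C" if "0 < y" for x y
  proof -
    obtain m :: nat where "\<bar>x\<bar> < real m * sqrt y" using ex_less_of_nat_mult[of "sqrt y"] \<open>0 < y\<close> by auto
    then have "(x + real m * sqrt y, y) \<in> C"
      by (intro shear_invariant_open_quadrant_subset[OF C axis] \<open>0 < y\<close>) linarith
    from shear_invariant_hshift[OF C(2) this, of "- int m"] show ?thesis by simp
  qed
  have lower_off_axis: "(x, y) \<in> C" if "y < 0" "x \<noteq> 0" for x y
  proof -
    define k where "k = \<lceil>- y / (x * x)\<rceil> + 1"
    have "0 < x * x" using \<open>x \<noteq> 0\<close> not_real_square_gt_zero by blast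
    then have "- y < of_int k * (x * x)"
      using ceiling_divide_upper[of "x * x" "- y"] by (simp add: k_def algebra_simps)
    then have "(x, y + of_int k * (x * x)) \<in> C" by (intro upper) linarith
    from shear_invariant_vshift_sq[OF C(2) this, of "- k"] show ?thesis by simp
  qed
  have "(x, y) \<in> C" for x y
  proof (cases "y < 0")
    case True
    show ?thesis
    proof (cases "x = 0")
      case True
      have "(- sqrt y, y) \<in> C" using \<open>y < 0\<close> by (intro lower_off_axis) simp_all
      from shear_invariant_hshift[OF C(2) this, of 1] True show ?thesis by simp
    qed (use lower_off_axis \<open>y < 0\<close> in blast)
  next
    case False
    then show ?thesis using upper axis by (cases "y = 0") auto
  qed
  then show ?thesis by auto
qed

lemma closure_orbit_sigma_sq_eq_UNIV:
  assumes "p \<noteq> (0, 0)"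
  shows "closure (orbit sigma_sq p) = UNIV"
proof -
  define S where "S = orbit sigma_sq p"
  have S: "shear_invariant S" unfolding S_def by (rule shear_invariant_orbit)
  obtain x y where "(x, y) \<in> S" "0 < x" "0 \<le> y"
    using shear_invariant_right_half_plane[OF S, of "fst p" "snd p"] mem_orbit_self[of p] assms
    by (auto simp: S_def)
  then have "(t, 0) \<in> closure S" for t
    using shear_invariant_small_height[OF S] by (intro shear_invariant_axis_in_closure[OF S]) blast
  then show ?thesis
    using shear_invariant_eq_UNIV[OF closed_closure shear_invariant_closure[OF S]] by (simp add: S_def)
qed

section \<open>Discreteness of the backward orbit of (1, 0)\<close>

lemma discreteI_finite_ball:
  assumes "\<And>x. x \<in> S \<Longrightarrow> \<exists>e>0. finite (S \<inter> ball x e)"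
  shows "discrete S"
  using assms by (intro discreteI) (auto simp: isolated_in_islimpt_iff islimpt_eq_infinite_ball)

lemma Eucl_sigma_sq_one_zero: "(Eucl sigma_sq ^^ n) (1, 0) = (1, 0)"
  by (induction n) (simp_all add: Eucl_sigma_sq)

lemma Eucl_sigma_sq_quadrant:
  assumes "p \<in> quadrant"
  shows "Eucl sigma_sq p \<in> quadrant"
proof -
  obtain x y where p: "p = (x, y)" "0 \<le> x" "0 \<le> y" using assms by (cases p) (auto simp: quadrant_def)
  have "sqrt y < x" if "y < x * x"
    using real_sqrt_less_mono[OF that] \<open>0 \<le> x\<close> by simp
  then show ?thesis using p by (auto simp: Eucl_sigma_sq quadrant_def)
qed

lemma Eucl_preimage_sigma_sq_Suc:
  "Eucl_preimage sigma_sq (Suc k) S = {p \<in> quadrant. Eucl sigma_sq p \<in> Eucl_preimage sigma_sq k S}"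
  by (auto simp: Eucl_preimage_def funpow_Suc_right Eucl_sigma_sq_quadrant simp del: funpow.simps)

lemma Eucl_sigma_sq_eq_cases:
  assumes "Eucl sigma_sq p = (x, y)"
  shows "p = (x + sqrt y, y) \<or> p = (x, y + x * \<bar>x\<bar>)"
  using assms by (cases p) (auto simp: Eucl_sigma_sq split: if_splits)

lemma finite_Eucl_preimage_sigma_sq:
  assumes "finite S"
  shows "finite (Eucl_preimage sigma_sq k S)"
proof (induction k)
  case 0
  have "Eucl_preimage sigma_sq 0 S \<subseteq> S" by (auto simp: Eucl_preimage_def)
  then show ?case using assms by (rule finite_subset)
next
  case (Suc k)
  let ?T = "Eucl_preimage sigma_sq k S"
  have "Eucl_preimage sigma_sq (Suc k) S
      \<subseteq> (\<lambda>(x, y). (x + sqrt y, y)) ` ?T \<union> (\<lambda>(x, y). (x, y + x * \<bar>x\<bar>)) ` ?T"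
  proof
    fix p assume "p \<in> Eucl_preimage sigma_sq (Suc k) S"
    then have "Eucl sigma_sq p \<in> ?T" by (simp add: Eucl_preimage_sigma_sq_Suc)
    moreover obtain x y where xy: "Eucl sigma_sq p = (x, y)" by (cases "Eucl sigma_sq p")
    ultimately show "p \<in> (\<lambda>(x, y). (x + sqrt y, y)) ` ?T \<union> (\<lambda>(x, y). (x, y + x * \<bar>x\<bar>)) ` ?T"
      using Eucl_sigma_sq_eq_cases[OF xy] by (auto intro: rev_image_eqI)
  qed
  then show ?case using Suc.IH by (meson finite_UnI finite_imageI finite_subset)
qed

lemma Eucl_preimage_one_zero_ge_one:
  assumes "p \<in> Eucl_preimage sigma_sq k {(1, 0)}"
  shows "p = (1, 0) \<or> (1 \<le> fst p \<and> 1 \<le> snd p)"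
  using assms
proof (induction k arbitrary: p)
  case 0
  then show ?case by (simp add: Eucl_preimage_def)
next
  case (Suc k)
  then have p: "p \<in> quadrant" and IH: "Eucl sigma_sq p = (1, 0) \<or>
      (1 \<le> fst (Eucl sigma_sq p) \<and> 1 \<le> snd (Eucl sigma_sq p))"
    by (simp_all add: Eucl_preimage_sigma_sq_Suc)
  obtain x y where p_eq: "p = (x, y)" and "0 \<le> x" "0 \<le> y"
    using p by (cases p) (auto simp: quadrant_def)
  show ?case
  proof (cases "y < x * \<bar>x\<bar>")
    case True
    then have "(x = 1 \<and> y = 0) \<or> (1 \<le> x - sqrt y \<and> 1 \<le> y)"
      using IH by (auto simp: p_eq Eucl_sigma_sq)
    moreover have "0 \<le> sqrt y" using \<open>0 \<le> y\<close> by simp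
    ultimately show ?thesis unfolding p_eq prod.inject fst_conv snd_conv by argo
  next
    case False
    then have "(x = 1 \<and> y = 1) \<or> (1 \<le> x \<and> 1 \<le> y - x * \<bar>x\<bar>)"
      using IH by (auto simp: p_eq Eucl_sigma_sq)
    moreover have "0 \<le> x * \<bar>x\<bar>" using \<open>0 \<le> x\<close> by simp
    ultimately show ?thesis unfolding p_eq prod.inject fst_conv snd_conv by argo
  qed
qed

lemma Eucl_sigma_sq_sum_decrease:
  assumes "1 \<le> x" "1 \<le> y"
  shows "fst (Eucl sigma_sq (x, y)) + snd (Eucl sigma_sq (x, y)) \<le> x + y - 1"
  using assms mult_mono[of 1 x 1 x] by (simp add: Eucl_sigma_sq)

lemma Eucl_preimage_one_zero_steps:
  assumes "p \<in> Eucl_preimage sigma_sq k {(1, 0)}"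
  shows "\<exists>j. real j \<le> fst p + snd p \<and> p \<in> Eucl_preimage sigma_sq j {(1, 0)}"
  using assms
proof (induction k arbitrary: p)
  case 0
  then show ?case by (intro exI[of _ 0]) (simp add: Eucl_preimage_def quadrant_def)
next
  case (Suc k)
  show ?case
  proof (cases "p = (1, 0)")
    case True
    then show ?thesis by (intro exI[of _ 0]) (simp add: Eucl_preimage_def quadrant_def)
  next
    case False
    then have "1 \<le> fst p" "1 \<le> snd p" using Eucl_preimage_one_zero_ge_one[OF Suc.prems] by auto
    moreover have "p \<in> quadrant" "Eucl sigma_sq p \<in> Eucl_preimage sigma_sq k {(1, 0)}"
      using Suc.prems by (simp_all add: Eucl_preimage_sigma_sq_Suc)
    moreover from Suc.IH[OF this(2)] obtain j where
      "real j \<le> fst (Eucl sigma_sq p) + snd (Eucl sigma_sq p)"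
      "Eucl sigma_sq p \<in> Eucl_preimage sigma_sq j {(1, 0)}" by blast
    ultimately show ?thesis
      using Eucl_sigma_sq_sum_decrease[of "fst p" "snd p"]
      by (intro exI[of _ "Suc j"]) (simp add: Eucl_preimage_sigma_sq_Suc)
  qed
qed

lemma finite_Eucl_preimages_one_zero_bounded:
  "finite ((\<Union>k. Eucl_preimage sigma_sq k {(1, 0)}) \<inter> {p. fst p + snd p \<le> R})"
proof (rule finite_subset)
  show "(\<Union>k. Eucl_preimage sigma_sq k {(1, 0)}) \<inter> {p. fst p + snd p \<le> R}
      \<subseteq> (\<Union>j\<le>nat \<lceil>R\<rceil>. Eucl_preimage sigma_sq j {(1, 0)})"
  proof
    fix p assume "p \<in> (\<Union>k. Eucl_preimage sigma_sq k {(1, 0)}) \<inter> {p. fst p + snd p \<le> R}"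
    then obtain k where "p \<in> Eucl_preimage sigma_sq k {(1, 0)}" "fst p + snd p \<le> R" by blast
    then obtain j where "real j \<le> R" "p \<in> Eucl_preimage sigma_sq j {(1, 0)}"
      using Eucl_preimage_one_zero_steps[of p k] by force
    moreover from this have "j \<le> nat \<lceil>R\<rceil>" by (simp add: le_nat_iff le_ceiling_iff)
    ultimately show "p \<in> (\<Union>j\<le>nat \<lceil>R\<rceil>. Eucl_preimage sigma_sq j {(1, 0)})" by blast
  qed
  show "finite (\<Union>j\<le>nat \<lceil>R\<rceil>. Eucl_preimage sigma_sq j {(1, 0)})"
    by (simp add: finite_Eucl_preimage_sigma_sq)
qed

lemma discrete_Eucl_preimages_one_zero: "discrete (\<Union>k. Eucl_preimage sigma_sq k {(1, 0)})"
proof (rule discreteI_finite_ball)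
  fix x :: "real \<times> real"
  let ?D = "\<Union>k. Eucl_preimage sigma_sq k {(1, 0)}"
  have "ball x 1 \<subseteq> {p. fst p + snd p \<le> fst x + snd x + 2}"
  proof
    fix p assume "p \<in> ball x 1"
    then have "dist (fst x) (fst p) < 1" "dist (snd x) (snd p) < 1"
      using dist_fst_le[of x p] dist_snd_le[of x p] by simp_all
    then show "p \<in> {p. fst p + snd p \<le> fst x + snd x + 2}" by (simp add: dist_real_def)
  qed
  then have "?D \<inter> ball x 1 \<subseteq> ?D \<inter> {p. fst p + snd p \<le> fst x + snd x + 2}" by blast
  then have "finite (?D \<inter> ball x 1)"
    using finite_Eucl_preimages_one_zero_bounded by (rule finite_subset)
  then show "\<exists>e>0. finite (?D \<inter> ball x e)" by (intro exI[of _ 1]) simp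
qed

theorem theorem2:
  shows "(\<forall>p :: real \<times> real. p \<noteq> (0, 0) \<longrightarrow> closure (orbit sigma_sq p) = UNIV)
    \<and> (let D = (\<Union>n. \<Union>k. Eucl_preimage sigma_sq k {(Eucl sigma_sq ^^ n) (1, 0)})
       in D \<subseteq> quadrant \<and> discrete D)"
proof -
  have "(\<Union>n. \<Union>k. Eucl_preimage sigma_sq k {(Eucl sigma_sq ^^ n) (1, 0)})
      = (\<Union>k. Eucl_preimage sigma_sq k {(1, 0)})"
    by (simp add: Eucl_sigma_sq_one_zero)
  moreover have "(\<Union>k. Eucl_preimage sigma_sq k {(1, 0)}) \<subseteq> quadrant"
    by (auto simp: Eucl_preimage_def)
  ultimately show ?thesis
    using closure_orbit_sigma_sq_eq_UNIV discrete_Eucl_preimages_one_zero by (simp add: Let_def)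
qed

end
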